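(* Let $F$ be a safe sentence and let $\mathbf c$ be a nonempty finite set of object constants containing every object constant occurring in $F$. Then $\mathrm{SM}[\mathrm{Ground}_{\mathbf c}[F]]$ is equivalent to $\mathrm{SM}[F]$ (they are satisfied by the same interpretations).
   Context: Formulas are first-order formulas over a signature with object constants, predicate constants and equality, but no function constants of arity $>0$. Primitive connectives are $\bot,\land,\lor,\rightarrow$, quantifiers $\forall,\exists$; $\neg G$ is $G\rightarrow\bot$, $\top$ is $\bot\rightarrow\bot$, $G\leftrightarrow H$ is $(G\rightarrow H)\land(H\rightarrow G)$. A sentence is a formula without free variables. Stable model operator: for a sentence $F$, let $\mathbf p=p_1,\dots,p_n$ be all predicate constants occurring in $F$ and $\mathbf u=u_1,\dots,u_n$ distinct predicate variables with matching arities. $\mathbf u\le\mathbf p$ is $\bigwedge_i\forall\mathbf x(u_i(\mathbf x)\rightarrow p_i(\mathbf x))$, $\mathbf u=\mathbf p$ is $\bigwedge_i\forall\mathbf x(u_i(\mathbf x)\leftrightarrow p_i(\mathbf x))$, $\mathbf u<\mathbf p$ is $(\mathbf u\le\mathbf p)\land\neg(\mathbf u=\mathbf p)$. $F^*(\mathbf u)$: $p_i(\mathbf t)^*=u_i(\mathbf t)$; $(t_1=t_2)^*=(t_1=t_2)$; $\bot^*=\bot$; $(G\land H)^*=G^*\land H^*$; $(G\lor H)^*=G^*\lor H^*$; $(G\rightarrow H)^*=(G^*\rightarrow H^* )\land(G\rightarrow H)$; $(\forall xG)^*=\forall xG^*$; $(\exists xG)^*=\exists xG^*$. $\mathrm{SM}[F]$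 is $F\land\neg\exists\mathbf u((\mathbf u<\mathbf p)\land F^*(\mathbf u))$. Restricted variables: for quantifier-free $G$, $\mathrm{RV}(G)$ is: $\emptyset$ if $G$ is an equality between two variables; the set of variables of $G$ if $G$ is any other atomic formula; $\mathrm{RV}(\bot)=\emptyset$; $\mathrm{RV}(G\land H)=\mathrm{RV}(G)\cup\mathrm{RV}(H)$; $\mathrm{RV}(G\lor H)=\mathrm{RV}(G)\cap\mathrm{RV}(H)$; $\mathrm{RV}(G\rightarrow H)=\emptyset$. An occurrence of a subformula or variable is positive if the number of implications containing it in their antecedent is even, negative otherwise, and strictly positive if it is in the antecedent of no implication. A prenex sentence $Q_1x_1\cdots Q_nx_nM$ ($M$ quantifier-free, $x_i$ distinct) is semi-safe if every strictly positive occurrence of every $x_i$ in $M$ belongs to a subformula $G\rightarrow H$ with $x_i\in\mathrm{RV}(G)$. Simplification transformations: $\neg\bot\mapsto\top$, $\neg\top\mapsto\bot$; $\bot\land G\mapsto\bot$, $G\land\bot\mapsto\bot$, $\top\land G\mapsto G$, $G\land\top\mapsto G$; $\bot\lor G\mapsto G$, $G\lor\bot\mapsto G$, $\top\lor G\mapsto\top$, $G\lor\top\mapsto\top$; $\bot\rightarrow G\mapsto\top$, $G\rightarrow\top\mapsto\top$, $\top\rightarrow G\mapsto G$. A variable $x$ is positively (resp. negatively) weakly restricted in a quantifier-free formula $G$ if the formula obtained from $G$ by first replacing every atomic formula $A$ of $G$ with $x\in\mathrm{RV}(A)$ by $\bot$ and then applying the simplification transformations is $\top$ (resp. $\bot$).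 A semi-safe prenex sentence $Q_1x_1\cdots Q_nx_nM$ is safe if for every occurrence of every variable $x_i$: (a) if $Q_i=\forall$, the occurrence belongs to a positive subformula (of the sentence) in which $x_i$ is positively weakly restricted, or to a negative subformula in which $x_i$ is negatively weakly restricted; (b) if $Q_i=\exists$, the occurrence belongs to a negative subformula in which $x_i$ is positively weakly restricted, or to a positive subformula in which $x_i$ is negatively weakly restricted. Grounding: for a prenex sentence $F$ and nonempty finite set $\mathbf c$ of object constants, $\mathrm{Ground}_{\mathbf c}[F]$ is $F$ if $F$ is quantifier-free; $\mathrm{Ground}_{\mathbf c}[\forall xG(x)]=\bigwedge_{c\in\mathbf c}\mathrm{Ground}_{\mathbf c}[G(c)]$; $\mathrm{Ground}_{\mathbf c}[\exists xG(x)]=\bigvee_{c\in\mathbf c}\mathrm{Ground}_{\mathbf c}[G(c)]$. *)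

theory Defs
  imports Main
begin

text \<open>A predicate constant is identified by its name together with its arity,
  i.e. the atom Atom p ts uses the predicate constant (p, length ts).\<close>

datatype ('v, 'c) trm = Var 'v | Cst 'c

datatype ('p, 'v, 'c) fm =
    Bot
  | Atom 'p "('v, 'c) trm list"
  | Eq "('v, 'c) trm" "('v, 'c) trm"
  | And "('p, 'v, 'c) fm" "('p, 'v, 'c) fm"
  | Or "('p, 'v, 'c) fm" "('p, 'v, 'c) fm"
  | Imp "('p, 'v, 'c) fm" "('p, 'v, 'c) fm"
  | All 'v "('p, 'v, 'c) fm"
  | Ex 'v "('p, 'v, 'c) fm"

abbreviation Top :: "('p, 'v, 'c) fm" where "Top \<equiv> Imp Bot Bot"
abbreviation Neg :: "('p, 'v, 'c) fm \<Rightarrow> ('p, 'v, 'c) fm" where "Neg G \<equiv> Imp G Bot"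

fun tvars :: "('v, 'c) trm \<Rightarrow> 'v set" where
  "tvars (Var x) = {x}"
| "tvars (Cst c) = {}"

fun tconsts :: "('v, 'c) trm \<Rightarrow> 'c set" where
  "tconsts (Var x) = {}"
| "tconsts (Cst c) = {c}"

fun fv :: "('p, 'v, 'c) fm \<Rightarrow> 'v set" where
  "fv Bot = {}"
| "fv (Atom p ts) = (\<Union>t\<in>set ts. tvars t)"
| "fv (Eq t1 t2) = tvars t1 \<union> tvars t2"
| "fv (And G H) = fv G \<union> fv H"
| "fv (Or G H) = fv G \<union> fv H"
| "fv (Imp G H) = fv G \<union> fv H"
| "fv (All x G) = fv G - {x}"
| "fv (Ex x G) = fv G - {x}"

definition sentence :: "('p, 'v, 'c) fm \<Rightarrow> bool" where
  "sentence F \<longleftrightarrow> fv F = {}"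

fun consts_fm :: "('p, 'v, 'c) fm \<Rightarrow> 'c set" where
  "consts_fm Bot = {}"
| "consts_fm (Atom p ts) = (\<Union>t\<in>set ts. tconsts t)"
| "consts_fm (Eq t1 t2) = tconsts t1 \<union> tconsts t2"
| "consts_fm (And G H) = consts_fm G \<union> consts_fm H"
| "consts_fm (Or G H) = consts_fm G \<union> consts_fm H"
| "consts_fm (Imp G H) = consts_fm G \<union> consts_fm H"
| "consts_fm (All x G) = consts_fm G"
| "consts_fm (Ex x G) = consts_fm G"

fun preds :: "('p, 'v, 'c) fm \<Rightarrow> ('p \<times> nat) set" where
  "preds Bot = {}"
| "preds (Atom p ts) = {(p, length ts)}"
| "preds (Eq t1 t2) = {}"
| "preds (And G H) = preds G \<union> preds H"
| "preds (Or G H) = preds G \<union> preds H"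
| "preds (Imp G H) = preds G \<union> preds H"
| "preds (All x G) = preds G"
| "preds (Ex x G) = preds G"

fun qfree :: "('p, 'v, 'c) fm \<Rightarrow> bool" where
  "qfree (And G H) = (qfree G \<and> qfree H)"
| "qfree (Or G H) = (qfree G \<and> qfree H)"
| "qfree (Imp G H) = (qfree G \<and> qfree H)"
| "qfree (All x G) = False"
| "qfree (Ex x G) = False"
| "qfree _ = True"

text \<open>An interpretation over a (nonempty) universe 'd consists of an interpretation
  of object constants C and of predicate constants P (P p ds for length ds = n is
  the extent of the predicate constant (p, n)); equality is identity.\<close>

fun tval :: "('c \<Rightarrow> 'd) \<Rightarrow> ('v \<Rightarrow> 'd) \<Rightarrow> ('v, 'c) trm \<Rightarrow> 'd" where
  "tval C e (Var x) = e x"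
| "tval C e (Cst c) = C c"

fun eval :: "('c \<Rightarrow> 'd) \<Rightarrow> ('p \<Rightarrow> 'd list \<Rightarrow> bool) \<Rightarrow> ('v \<Rightarrow> 'd)
              \<Rightarrow> ('p, 'v, 'c) fm \<Rightarrow> bool" where
  "eval C P e Bot = False"
| "eval C P e (Atom p ts) = P p (map (tval C e) ts)"
| "eval C P e (Eq t1 t2) = (tval C e t1 = tval C e t2)"
| "eval C P e (And G H) = (eval C P e G \<and> eval C P e H)"
| "eval C P e (Or G H) = (eval C P e G \<or> eval C P e H)"
| "eval C P e (Imp G H) = (eval C P e G \<longrightarrow> eval C P e H)"
| "eval C P e (All x G) = (\<forall>d. eval C P (e(x := d)) G)"
| "eval C P e (Ex x G) = (\<exists>d. eval C P (e(x := d)) G)"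

definition sat :: "('c \<Rightarrow> 'd) \<Rightarrow> ('p \<Rightarrow> 'd list \<Rightarrow> bool) \<Rightarrow> ('p, 'v, 'c) fm \<Rightarrow> bool" where
  "sat C P F \<longleftrightarrow> (\<forall>e. eval C P e F)"

fun rename_preds :: "('p \<Rightarrow> 'q) \<Rightarrow> ('p, 'v, 'c) fm \<Rightarrow> ('q, 'v, 'c) fm" where
  "rename_preds f Bot = Bot"
| "rename_preds f (Atom p ts) = Atom (f p) ts"
| "rename_preds f (Eq t1 t2) = Eq t1 t2"
| "rename_preds f (And G H) = And (rename_preds f G) (rename_preds f H)"
| "rename_preds f (Or G H) = Or (rename_preds f G) (rename_preds f H)"
| "rename_preds f (Imp G H) = Imp (rename_preds f G) (rename_preds f H)"
| "rename_preds f (All x G) = All x (rename_preds f G)"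
| "rename_preds f (Ex x G) = Ex x (rename_preds f G)"

text \<open>F*(u): predicate constants p are represented by Inl p, the predicate
  variables u by Inr p (same arity).\<close>
fun star :: "('p, 'v, 'c) fm \<Rightarrow> ('p + 'p, 'v, 'c) fm" where
  "star Bot = Bot"
| "star (Atom p ts) = Atom (Inr p) ts"
| "star (Eq t1 t2) = Eq t1 t2"
| "star (And G H) = And (star G) (star H)"
| "star (Or G H) = Or (star G) (star H)"
| "star (Imp G H) = And (Imp (star G) (star H)) (rename_preds Inl (Imp G H))"
| "star (All x G) = All x (star G)"
| "star (Ex x G) = Ex x (star G)"

definition le_on :: "('p \<times> nat) set \<Rightarrow> ('p \<Rightarrow> 'd list \<Rightarrow> bool) \<Rightarrow> ('p \<Rightarrow> 'd list \<Rightarrow> bool) \<Rightarrow> bool" where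
  "le_on Ps U P \<longleftrightarrow> (\<forall>(p, n) \<in> Ps. \<forall>ds. length ds = n \<longrightarrow> U p ds \<longrightarrow> P p ds)"

definition eq_on :: "('p \<times> nat) set \<Rightarrow> ('p \<Rightarrow> 'd list \<Rightarrow> bool) \<Rightarrow> ('p \<Rightarrow> 'd list \<Rightarrow> bool) \<Rightarrow> bool" where
  "eq_on Ps U P \<longleftrightarrow> (\<forall>(p, n) \<in> Ps. \<forall>ds. length ds = n \<longrightarrow> (U p ds \<longleftrightarrow> P p ds))"

definition lt_on :: "('p \<times> nat) set \<Rightarrow> ('p \<Rightarrow> 'd list \<Rightarrow> bool) \<Rightarrow> ('p \<Rightarrow> 'd list \<Rightarrow> bool) \<Rightarrow> bool" where
  "lt_on Ps U P \<longleftrightarrow> le_on Ps U P \<and> \<not> eq_on Ps U P"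

definition SM :: "('c \<Rightarrow> 'd) \<Rightarrow> ('p \<Rightarrow> 'd list \<Rightarrow> bool) \<Rightarrow> ('p, 'v, 'c) fm \<Rightarrow> bool" where
  "SM C P F \<longleftrightarrow> sat C P F \<and>
     \<not> (\<exists>U. lt_on (preds F) U P \<and> sat C (case_sum P U) (star F))"

fun rv :: "('p, 'v, 'c) fm \<Rightarrow> 'v set" where
  "rv Bot = {}"
| "rv (Atom p ts) = (\<Union>t\<in>set ts. tvars t)"
| "rv (Eq t1 t2) = (case (t1, t2) of (Var _, Var _) \<Rightarrow> {} | _ \<Rightarrow> tvars t1 \<union> tvars t2)"
| "rv (And G H) = rv G \<union> rv H"
| "rv (Or G H) = rv G \<inter> rv H"
| "rv (Imp G H) = {}"
| "rv (All x G) = {}"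
| "rv (Ex x G) = {}"

datatype quant = QAll | QEx

fun prefix :: "('p, 'v, 'c) fm \<Rightarrow> (quant \<times> 'v) list" where
  "prefix (All x G) = (QAll, x) # prefix G"
| "prefix (Ex x G) = (QEx, x) # prefix G"
| "prefix _ = []"

fun matrix :: "('p, 'v, 'c) fm \<Rightarrow> ('p, 'v, 'c) fm" where
  "matrix (All x G) = matrix G"
| "matrix (Ex x G) = matrix G"
| "matrix G = G"

definition prenex_sentence :: "('p, 'v, 'c) fm \<Rightarrow> bool" where
  "prenex_sentence F \<longleftrightarrow> sentence F \<and> qfree (matrix F) \<and> distinct (map snd (prefix F))"

text \<open>Variables having a strictly positive occurrence in the (quantifier-free) formula
  that does not belong to any subformula G \<longrightarrow> H with the variable in RV(G).\<close>
fun sp_unrestricted :: "('p, 'v, 'c) fm \<Rightarrow> 'v set" where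
  "sp_unrestricted Bot = {}"
| "sp_unrestricted (Atom p ts) = (\<Union>t\<in>set ts. tvars t)"
| "sp_unrestricted (Eq t1 t2) = tvars t1 \<union> tvars t2"
| "sp_unrestricted (And G H) = sp_unrestricted G \<union> sp_unrestricted H"
| "sp_unrestricted (Or G H) = sp_unrestricted G \<union> sp_unrestricted H"
| "sp_unrestricted (Imp G H) = sp_unrestricted H - rv G"
| "sp_unrestricted (All x G) = sp_unrestricted G"
| "sp_unrestricted (Ex x G) = sp_unrestricted G"

definition semi_safe :: "('p, 'v, 'c) fm \<Rightarrow> bool" where
  "semi_safe F \<longleftrightarrow> prenex_sentence F \<and>
     (\<forall>x \<in> set (map snd (prefix F)). x \<notin> sp_unrestricted (matrix F))"

fun repl_bot :: "'v \<Rightarrow> ('p, 'v, 'c) fm \<Rightarrow> ('p, 'v, 'c) fm" where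
  "repl_bot x Bot = Bot"
| "repl_bot x (Atom p ts) = (if x \<in> rv (Atom p ts) then Bot else Atom p ts)"
| "repl_bot x (Eq t1 t2) = (if x \<in> rv (Eq t1 t2 :: ('p, 'v, 'c) fm) then Bot else Eq t1 t2)"
| "repl_bot x (And G H) = And (repl_bot x G) (repl_bot x H)"
| "repl_bot x (Or G H) = Or (repl_bot x G) (repl_bot x H)"
| "repl_bot x (Imp G H) = Imp (repl_bot x G) (repl_bot x H)"
| "repl_bot x (All y G) = All y (repl_bot x G)"
| "repl_bot x (Ex y G) = Ex y (repl_bot x G)"

text \<open>Exhaustive application of the simplification transformations (bottom-up;
  the rewriting system is terminating and confluent, so this computes its result).\<close>
definition simp_and :: "('p, 'v, 'c) fm \<Rightarrow> ('p, 'v, 'c) fm \<Rightarrow> ('p, 'v, 'c) fm" where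
  "simp_and G H = (if G = Bot \<or> H = Bot then Bot
                   else if G = Top then H else if H = Top then G else And G H)"

definition simp_or :: "('p, 'v, 'c) fm \<Rightarrow> ('p, 'v, 'c) fm \<Rightarrow> ('p, 'v, 'c) fm" where
  "simp_or G H = (if G = Top \<or> H = Top then Top
                  else if G = Bot then H else if H = Bot then G else Or G H)"

definition simp_imp :: "('p, 'v, 'c) fm \<Rightarrow> ('p, 'v, 'c) fm \<Rightarrow> ('p, 'v, 'c) fm" where
  "simp_imp G H = (if G = Bot \<or> H = Top then Top
                   else if G = Top then H else Imp G H)"

fun simplify :: "('p, 'v, 'c) fm \<Rightarrow> ('p, 'v, 'c) fm" where
  "simplify (And G H) = simp_and (simplify G) (simplify H)"
| "simplify (Or G H) = simp_or (simplify G) (simplify H)"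
| "simplify (Imp G H) = simp_imp (simplify G) (simplify H)"
| "simplify (All x G) = All x (simplify G)"
| "simplify (Ex x G) = Ex x (simplify G)"
| "simplify G = G"

definition pos_weakly_restricted :: "'v \<Rightarrow> ('p, 'v, 'c) fm \<Rightarrow> bool" where
  "pos_weakly_restricted x G \<longleftrightarrow> qfree G \<and> simplify (repl_bot x G) = Top"

definition neg_weakly_restricted :: "'v \<Rightarrow> ('p, 'v, 'c) fm \<Rightarrow> bool" where
  "neg_weakly_restricted x G \<longleftrightarrow> qfree G \<and> simplify (repl_bot x G) = Bot"

text \<open>Condition (a)/(b) for a subformula S occurring with polarity pol
  (True = positive) and a variable x bound by quantifier q.\<close>
definition good_sub :: "quant \<Rightarrow> 'v \<Rightarrow> bool \<Rightarrow> ('p, 'v, 'c) fm \<Rightarrow> bool" where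
  "good_sub q x pol S \<longleftrightarrow>
     (if (q = QAll) = pol then pos_weakly_restricted x S else neg_weakly_restricted x S)"

text \<open>Every occurrence of x in S (which occurs with polarity pol) belongs to a
  subformula of S that is good in the above sense.\<close>
fun all_occ_covered :: "quant \<Rightarrow> 'v \<Rightarrow> bool \<Rightarrow> ('p, 'v, 'c) fm \<Rightarrow> bool" where
  "all_occ_covered q x pol S \<longleftrightarrow> good_sub q x pol S \<or>
     (case S of
        Bot \<Rightarrow> True
      | Atom p ts \<Rightarrow> x \<notin> (\<Union>t\<in>set ts. tvars t)
      | Eq t1 t2 \<Rightarrow> x \<notin> tvars t1 \<union> tvars t2
      | And G H \<Rightarrow> all_occ_covered q x pol G \<and> all_occ_covered q x pol H
      | Or G H \<Rightarrow> all_occ_covered q x pol G \<and> all_occ_covered q x pol H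
      | Imp G H \<Rightarrow> all_occ_covered q x (\<not> pol) G \<and> all_occ_covered q x pol H
      | All y G \<Rightarrow> False
      | Ex y G \<Rightarrow> False)"

definition safe :: "('p, 'v, 'c) fm \<Rightarrow> bool" where
  "safe F \<longleftrightarrow> semi_safe F \<and>
     (\<forall>(q, x) \<in> set (prefix F). all_occ_covered q x True (matrix F))"

fun subst_t :: "'v \<Rightarrow> 'c \<Rightarrow> ('v, 'c) trm \<Rightarrow> ('v, 'c) trm" where
  "subst_t x c (Var y) = (if y = x then Cst c else Var y)"
| "subst_t x c (Cst d) = Cst d"

fun subst :: "'v \<Rightarrow> 'c \<Rightarrow> ('p, 'v, 'c) fm \<Rightarrow> ('p, 'v, 'c) fm" where
  "subst x c Bot = Bot"
| "subst x c (Atom p ts) = Atom p (map (subst_t x c) ts)"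
| "subst x c (Eq t1 t2) = Eq (subst_t x c t1) (subst_t x c t2)"
| "subst x c (And G H) = And (subst x c G) (subst x c H)"
| "subst x c (Or G H) = Or (subst x c G) (subst x c H)"
| "subst x c (Imp G H) = Imp (subst x c G) (subst x c H)"
| "subst x c (All y G) = All y (if y = x then G else subst x c G)"
| "subst x c (Ex y G) = Ex y (if y = x then G else subst x c G)"

fun fsize :: "('p, 'v, 'c) fm \<Rightarrow> nat" where
  "fsize (And G H) = Suc (fsize G + fsize H)"
| "fsize (Or G H) = Suc (fsize G + fsize H)"
| "fsize (Imp G H) = Suc (fsize G + fsize H)"
| "fsize (All x G) = Suc (fsize G)"
| "fsize (Ex x G) = Suc (fsize G)"
| "fsize _ = 1"

lemma fsize_subst [simp]: "fsize (subst x c G) = fsize G"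
  by (induction G) auto

fun bigAnd :: "('p, 'v, 'c) fm list \<Rightarrow> ('p, 'v, 'c) fm" where
  "bigAnd [] = Top"
| "bigAnd [G] = G"
| "bigAnd (G # Gs) = And G (bigAnd Gs)"

fun bigOr :: "('p, 'v, 'c) fm list \<Rightarrow> ('p, 'v, 'c) fm" where
  "bigOr [] = Bot"
| "bigOr [G] = G"
| "bigOr (G # Gs) = Or G (bigOr Gs)"

text \<open>Ground_c[F] where the finite nonempty set c is given by a list enumerating it\<close>
function ground :: "'c list \<Rightarrow> ('p, 'v, 'c) fm \<Rightarrow> ('p, 'v, 'c) fm" where
  "ground cs (All x G) = bigAnd (map (\<lambda>c. ground cs (subst x c G)) cs)"
| "ground cs (Ex x G) = bigOr (map (\<lambda>c. ground cs (subst x c G)) cs)"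
| "ground cs Bot = Bot"
| "ground cs (Atom p ts) = Atom p ts"
| "ground cs (Eq t1 t2) = Eq t1 t2"
| "ground cs (And G H) = And G H"
| "ground cs (Or G H) = Or G H"
| "ground cs (Imp G H) = Imp G H"
  by pat_completeness auto
termination
  by (relation "measure (\<lambda>(cs, F). fsize F)") auto

end

theory Submission
  imports Defs
begin

(*
  Let D be the set of values of the constants in cs. Grounding turns every quantifier of the
  prefix of F into one relativized to D, and grounding commutes with the star transformation.

  Semi-safety forces every stable model P, of F or of its grounding, to be supported in D:
  the restriction of P to tuples over D satisfies F* as soon as P satisfies F, so minimality
  makes it equal to P.

  For such P, and for every U <= P (which is then supported in D as well), safety ensures that
  assigning a quantified variable a value outside D never turns a universal instance false nor
  an existential instance true: every occurrence of the variable lies in a weakly restricted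
  subformula, whose truth value is fixed once the variable leaves D. So relativizing the prefix
  to D changes neither F under P nor F* under (P, U), and the two stable model conditions agree.
*)

lemma mem_tvars_iff: "x \<in> tvars t \<longleftrightarrow> t = Var x"
  by (cases t) auto

declare all_occ_covered.simps [simp del]

lemmas all_occ_covered_simps [simp] =
  all_occ_covered.simps[of q x pol Bot]
  all_occ_covered.simps[of q x pol "Atom p ts"]
  all_occ_covered.simps[of q x pol "Eq t1 t2"]
  all_occ_covered.simps[of q x pol "And G H"]
  all_occ_covered.simps[of q x pol "Or G H"]
  all_occ_covered.simps[of q x pol "Imp G H"]
  all_occ_covered.simps[of q x pol "All y G"]
  all_occ_covered.simps[of q x pol "Ex y G"]
  for q x pol p ts t1 t2 G H y

lemma qfree_rename_preds [simp]: "qfree (rename_preds f G) = qfree G"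
  by (induction G) auto

lemma consts_fm_rename_preds [simp]: "consts_fm (rename_preds f G) = consts_fm G"
  by (induction G) auto

lemma repl_bot_rename_preds: "repl_bot x (rename_preds f G) = rename_preds f (repl_bot x G)"
  by (induction G) auto

lemma rename_preds_eq_Bot [simp]: "rename_preds f G = Bot \<longleftrightarrow> G = Bot"
  by (cases G) auto

lemma rename_preds_eq_Top [simp]: "rename_preds f G = Top \<longleftrightarrow> G = Top"
  by (cases G) auto

lemma simplify_rename_preds: "simplify (rename_preds f G) = rename_preds f (simplify G)"
  by (induction G) (auto simp: simp_and_def simp_or_def simp_imp_def)

lemma good_sub_rename_preds [simp]: "good_sub q x pol (rename_preds f G) = good_sub q x pol G"
  by (simp add: good_sub_def pos_weakly_restricted_def neg_weakly_restricted_def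
      repl_bot_rename_preds simplify_rename_preds)

lemma all_occ_covered_rename_preds [simp]:
  "all_occ_covered q x pol (rename_preds f G) = all_occ_covered q x pol G"
  by (induction G arbitrary: pol)
    (subst (1 2) all_occ_covered.simps; simp only: good_sub_rename_preds; simp)+

lemma qfree_star [simp]: "qfree (star G) = qfree G"
  by (induction G) auto

lemma consts_fm_star [simp]: "consts_fm (star G) = consts_fm G"
  by (induction G) auto

lemma repl_bot_star: "repl_bot x (star G) = star (repl_bot x G)"
  by (induction G) (auto simp: repl_bot_rename_preds)

lemma simplify_star_Top_Bot:
  "(simplify G = Top \<longrightarrow> simplify (star G) = Top) \<and> (simplify G = Bot \<longrightarrow> simplify (star G) = Bot)"
  by (induction G)
    (auto simp: simp_and_def simp_or_def simp_imp_def simplify_rename_preds split: if_splits)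

lemma good_sub_star: "good_sub q x pol G \<Longrightarrow> good_sub q x pol (star G)"
  using simplify_star_Top_Bot[of "repl_bot x G"]
  by (auto simp: good_sub_def pos_weakly_restricted_def neg_weakly_restricted_def repl_bot_star)

lemma all_occ_covered_star:
  fixes G :: "('p, 'v, 'c) fm"
  assumes "all_occ_covered q x pol G"
  shows "all_occ_covered q x pol (star G)"
proof -
  have good: "all_occ_covered q x pol' (star G')"
    if "good_sub q x pol' G'" for pol' and G' :: "('p, 'v, 'c) fm"
    using good_sub_star[OF that] by (subst all_occ_covered.simps) simp
  from assms show ?thesis
    by (induction G arbitrary: pol) (auto dest: good)
qed

lemma prefix_star [simp]: "prefix (star F) = prefix F"
  by (induction F) auto

lemma matrix_star [simp]: "matrix (star F) = star (matrix F)"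
  by (induction F) auto

lemma consts_fm_matrix [simp]: "consts_fm (matrix F) = consts_fm F"
  by (induction F) auto

lemma preds_matrix [simp]: "preds (matrix F) = preds F"
  by (induction F) auto

lemma fv_matrix: "fv (matrix F) \<subseteq> fv F \<union> snd ` set (prefix F)"
  by (induction F) auto

lemma sp_unrestricted_subset_fv: "qfree G \<Longrightarrow> sp_unrestricted G \<subseteq> fv G"
  by (induction G) auto

lemma sp_unrestricted_matrix_empty: "semi_safe F \<Longrightarrow> sp_unrestricted (matrix F) = {}"
  using fv_matrix[of F] sp_unrestricted_subset_fv[of "matrix F"]
  unfolding semi_safe_def prenex_sentence_def sentence_def by auto

lemma rename_preds_subst: "rename_preds f (subst x c G) = subst x c (rename_preds f G)"
  by (induction G) auto

lemma star_subst: "star (subst x c G) = subst x c (star G)"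
  by (induction G) (auto simp: rename_preds_subst)

lemma star_bigAnd: "Gs \<noteq> [] \<Longrightarrow> star (bigAnd Gs) = bigAnd (map star Gs)"
  by (induction Gs rule: bigAnd.induct) auto

lemma star_bigOr: "Gs \<noteq> [] \<Longrightarrow> star (bigOr Gs) = bigOr (map star Gs)"
  by (induction Gs rule: bigOr.induct) auto

lemma star_ground: "cs \<noteq> [] \<Longrightarrow> star (ground cs F) = ground cs (star F)"
  by (induction cs F rule: ground.induct)
    (simp_all add: star_bigAnd star_bigOr star_subst o_def cong: list.map_cong)

lemma preds_subst [simp]: "preds (subst x c G) = preds G"
  by (induction G) auto

lemma preds_bigAnd: "Gs \<noteq> [] \<Longrightarrow> preds (bigAnd Gs) = (\<Union>G\<in>set Gs. preds G)"
  by (induction Gs rule: bigAnd.induct) auto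

lemma preds_bigOr: "Gs \<noteq> [] \<Longrightarrow> preds (bigOr Gs) = (\<Union>G\<in>set Gs. preds G)"
  by (induction Gs rule: bigOr.induct) auto

lemma preds_ground: "cs \<noteq> [] \<Longrightarrow> preds (ground cs F) = preds F"
  by (induction cs F rule: ground.induct) (simp_all add: preds_bigAnd preds_bigOr)

lemma eval_rename_Inl [simp]: "eval C (case_sum P U) e (rename_preds Inl G) = eval C P e G"
  by (induction G arbitrary: e) auto

lemma eval_of_eval_star:
  "(\<And>p ds. U p ds \<Longrightarrow> P p ds) \<Longrightarrow> eval C (case_sum P U) e (star G) \<Longrightarrow> eval C P e G"
  by (induction G arbitrary: e) auto

lemma tval_subst_t: "tval C e (subst_t x c t) = tval C (e(x := C c)) t"
  by (cases t) auto

lemma eval_subst: "eval C I e (subst x c G) = eval C I (e(x := C c)) G"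
  by (induction G arbitrary: e) (auto simp: tval_subst_t o_def fun_upd_twist)

lemma eval_cong: "\<forall>y\<in>fv G. e' y = e y \<Longrightarrow> eval C I e' G = eval C I e G"
proof (induction G arbitrary: e e')
  case (Atom p ts)
  have "tval C e' t = tval C e t" if "t \<in> set ts" for t
    using Atom that by (cases t) auto
  then show ?case
    by (simp cong: map_cong)
next
  case (Eq t1 t2)
  then show ?case by (cases t1; cases t2) auto
next
  case (All y G)
  have "eval C I (e'(y := d)) G = eval C I (e(y := d)) G" for d
    using All.prems by (intro All.IH) auto
  then show ?case by simp
next
  case (Ex y G)
  have "eval C I (e'(y := d)) G = eval C I (e(y := d)) G" for d
    using Ex.prems by (intro Ex.IH) auto
  then show ?case by simp
qed (auto simp: ball_Un)

lemma eval_cong_notin_fv: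
  "x \<notin> fv G \<Longrightarrow> \<forall>y. y \<noteq> x \<longrightarrow> e' y = e y \<Longrightarrow> eval C I e' G = eval C I e G"
  by (metis eval_cong)

lemma eval_simplify [simp]: "eval C I e (simplify G) = eval C I e G"
  by (induction G arbitrary: e) (auto simp: simp_and_def simp_or_def simp_imp_def)

lemma eval_bigAnd: "Gs \<noteq> [] \<Longrightarrow> eval C I e (bigAnd Gs) = (\<forall>G\<in>set Gs. eval C I e G)"
  by (induction Gs rule: bigAnd.induct) auto

lemma eval_bigOr: "Gs \<noteq> [] \<Longrightarrow> eval C I e (bigOr Gs) = (\<exists>G\<in>set Gs. eval C I e G)"
  by (induction Gs rule: bigOr.induct) auto

section \<open>Grounding relativizes the quantifier prefix\<close>

fun eval_prefix :: "'d set \<Rightarrow> (quant \<times> 'v) list \<Rightarrow> (('v \<Rightarrow> 'd) \<Rightarrow> bool) \<Rightarrow> ('v \<Rightarrow> 'd) \<Rightarrow> bool" where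
  "eval_prefix D [] \<Phi> e = \<Phi> e"
| "eval_prefix D ((QAll, x) # qs) \<Phi> e = (\<forall>d\<in>D. eval_prefix D qs \<Phi> (e(x := d)))"
| "eval_prefix D ((QEx, x) # qs) \<Phi> e = (\<exists>d\<in>D. eval_prefix D qs \<Phi> (e(x := d)))"

lemma eval_prefix_mono: "(\<And>e. \<Phi> e \<Longrightarrow> \<Psi> e) \<Longrightarrow> eval_prefix D qs \<Phi> e \<Longrightarrow> eval_prefix D qs \<Psi> e"
  by (induction D qs \<Phi> e rule: eval_prefix.induct) auto

lemma eval_prenex: "eval C I e F = eval_prefix UNIV (prefix F) (\<lambda>e. eval C I e (matrix F)) e"
  by (induction F arbitrary: e) auto

lemma eval_prefix_subst:
  "eval_prefix D (prefix (subst x c G)) (\<lambda>e. eval C I e (matrix (subst x c G))) e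
   = eval_prefix D (prefix G) (\<lambda>e. eval C I e (matrix G)) (e(x := C c))"
  by (induction G arbitrary: e) (auto simp: eval_subst tval_subst_t o_def fun_upd_twist)

lemma eval_ground:
  "cs \<noteq> [] \<Longrightarrow>
    eval C I e (ground cs F) = eval_prefix (C ` set cs) (prefix F) (\<lambda>e. eval C I e (matrix F)) e"
  by (induction cs F arbitrary: e rule: ground.induct)
    (auto simp: eval_bigAnd eval_bigOr eval_prefix_subst)

definition dir_imp :: "bool \<Rightarrow> bool \<Rightarrow> bool \<Rightarrow> bool" where
  "dir_imp up A B \<longleftrightarrow> (if up then A \<longrightarrow> B else B \<longrightarrow> A)"

lemma dir_imp_refl [simp]: "dir_imp up A A"
  by (simp add: dir_imp_def)

lemma dir_imp_conj: "dir_imp up A B \<Longrightarrow> dir_imp up A' B' \<Longrightarrow> dir_imp up (A \<and> A') (B \<and> B')"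
  by (auto simp: dir_imp_def)

lemma dir_imp_disj: "dir_imp up A B \<Longrightarrow> dir_imp up A' B' \<Longrightarrow> dir_imp up (A \<or> A') (B \<or> B')"
  by (auto simp: dir_imp_def)

lemma dir_imp_imp:
  "dir_imp (\<not> up) A B \<Longrightarrow> dir_imp up A' B' \<Longrightarrow> dir_imp up (A \<longrightarrow> A') (B \<longrightarrow> B')"
  by (auto simp: dir_imp_def)

definition relativizable :: "'d set \<Rightarrow> quant \<Rightarrow> 'v \<Rightarrow> (('v \<Rightarrow> 'd) \<Rightarrow> bool) \<Rightarrow> bool" where
  "relativizable D q x \<Phi> \<longleftrightarrow> (\<forall>e d. d \<notin> D \<longrightarrow> dir_imp (q = QAll) (\<Phi> e) (\<Phi> (e(x := d))))"

lemma relativizable_eval_prefix: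
  assumes "x \<notin> snd ` set qs" and "relativizable D q x \<Phi>"
  shows "relativizable D q x (eval_prefix D qs \<Phi>)"
  using assms
proof (induction qs)
  case (Cons qy qs)
  obtain q' y where qy: "qy = (q', y)" by (cases qy)
  with Cons have IH: "relativizable D q x (eval_prefix D qs \<Phi>)" and "x \<noteq> y" by auto
  have twist: "e(x := d, y := d') = e(y := d', x := d)" for e d d'
    using \<open>x \<noteq> y\<close> by (rule fun_upd_twist)
  from IH show ?case
    unfolding relativizable_def dir_imp_def qy by (cases q') (auto simp: twist; blast)+
qed (simp add: relativizable_def)

lemma eval_prefix_relativize:
  assumes "distinct (map snd qs)" and "D \<noteq> {}" and "\<forall>(q, x)\<in>set qs. relativizable D q x \<Phi>"
  shows "eval_prefix UNIV qs \<Phi> e = eval_prefix D qs \<Phi> e"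
  using assms
proof (induction qs arbitrary: e)
  case (Cons qx qs)
  obtain q x where qx: "qx = (q, x)" by (cases qx)
  obtain d\<^sub>0 where "d\<^sub>0 \<in> D" using Cons.prems(2) by blast
  let ?\<Psi> = "\<lambda>d. eval_prefix D qs \<Phi> (e(x := d))"
  have "relativizable D q x (eval_prefix D qs \<Phi>)"
    using Cons.prems qx by (intro relativizable_eval_prefix) auto
  then have outside: "dir_imp (q = QAll) (?\<Psi> d\<^sub>0) (?\<Psi> d)" if "d \<notin> D" for d
    using that unfolding relativizable_def by (metis fun_upd_upd)
  have "(\<forall>d. ?\<Psi> d) \<longleftrightarrow> (\<forall>d\<in>D. ?\<Psi> d)" if "q = QAll"
    using outside \<open>d\<^sub>0 \<in> D\<close> that unfolding dir_imp_def by metis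
  moreover have "(\<exists>d. ?\<Psi> d) \<longleftrightarrow> (\<exists>d\<in>D. ?\<Psi> d)" if "q = QEx"
    using outside \<open>d\<^sub>0 \<in> D\<close> that unfolding dir_imp_def by (metis quant.distinct(2))
  ultimately show ?case
    using Cons by (cases q) (auto simp: qx)
qed simp

section \<open>Safety\<close>

definition supported_in :: "('p \<times> nat) set \<Rightarrow> 'd set \<Rightarrow> ('p \<Rightarrow> 'd list \<Rightarrow> bool) \<Rightarrow> bool" where
  "supported_in Ps D I \<longleftrightarrow> (\<forall>(p, n)\<in>Ps. \<forall>ds. length ds = n \<longrightarrow> I p ds \<longrightarrow> set ds \<subseteq> D)"

lemma supported_in_empty [simp]: "supported_in {} D I"
  by (simp add: supported_in_def)

lemma supported_in_Un [simp]:
  "supported_in (Ps \<union> Qs) D I \<longleftrightarrow> supported_in Ps D I \<and> supported_in Qs D I"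
  unfolding supported_in_def by blast

lemma supported_in_insert [simp]:
  "supported_in (insert (p, n) Ps) D I \<longleftrightarrow>
     (\<forall>ds. length ds = n \<longrightarrow> I p ds \<longrightarrow> set ds \<subseteq> D) \<and> supported_in Ps D I"
  unfolding supported_in_def by blast

lemma supported_in_rename_Inl [simp]:
  "supported_in (preds (rename_preds Inl G)) D (case_sum P U) = supported_in (preds G) D P"
  by (induction G) auto

lemma supported_in_star:
  "supported_in (preds G) D P \<Longrightarrow> supported_in (preds G) D U \<Longrightarrow>
     supported_in (preds (star G)) D (case_sum P U)"
  by (induction G) auto

lemma eval_repl_bot:
  assumes "qfree S" "supported_in (preds S) D I" "C ` consts_fm S \<subseteq> D" "e x \<notin> D"
  shows "eval C I e (repl_bot x S) = eval C I e S"
  using assms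
proof (induction S)
  case (Atom p ts)
  show ?case
  proof (cases "x \<in> rv (Atom p ts)")
    case True
    then obtain t where "t \<in> set ts" and "x \<in> tvars t"
      by auto
    then have "e x \<in> set (map (tval C e) ts)"
      by (metis image_eqI mem_tvars_iff set_map tval.simps(1))
    with \<open>e x \<notin> D\<close> have "\<not> set (map (tval C e) ts) \<subseteq> D"
      by blast
    with Atom.prems(2) have "\<not> I p (map (tval C e) ts)"
      by (metis length_map preds.simps(2) supported_in_insert)
    with True show ?thesis
      by simp
  qed simp
next
  case (Eq t1 t2)
  then show ?case by (cases t1; cases t2) auto
qed auto

lemma eval_if_pos_weakly_restricted:
  assumes "pos_weakly_restricted x S" "supported_in (preds S) D I" "C ` consts_fm S \<subseteq> D" "e x \<notin> D"
  shows "eval C I e S"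
proof -
  from assms(1) have "qfree S" and top: "simplify (repl_bot x S) = Top"
    by (simp_all add: pos_weakly_restricted_def)
  have "eval C I e (simplify (repl_bot x S))"
    by (simp add: top)
  then show ?thesis
    using eval_repl_bot[of S D I C e x, OF \<open>qfree S\<close> assms(2-4)] by simp
qed

lemma not_eval_if_neg_weakly_restricted:
  assumes "neg_weakly_restricted x S" "supported_in (preds S) D I" "C ` consts_fm S \<subseteq> D" "e x \<notin> D"
  shows "\<not> eval C I e S"
proof -
  from assms(1) have "qfree S" and bot: "simplify (repl_bot x S) = Bot"
    by (simp_all add: neg_weakly_restricted_def)
  have "\<not> eval C I e (simplify (repl_bot x S))"
    by (simp add: bot)
  then show ?thesis
    using eval_repl_bot[of S D I C e x, OF \<open>qfree S\<close> assms(2-4)] by simp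
qed

lemma good_sub_dir_imp:
  assumes "good_sub q x pol S" "supported_in (preds S) D I" "C ` consts_fm S \<subseteq> D" "e' x \<notin> D"
  shows "dir_imp ((q = QAll) = pol) (eval C I e S) (eval C I e' S)"
  using assms eval_if_pos_weakly_restricted[of x S D I C e']
    not_eval_if_neg_weakly_restricted[of x S D I C e']
  unfolding good_sub_def dir_imp_def by auto

lemma all_occ_covered_dir_imp:
  assumes "qfree S" "all_occ_covered q x pol S" "supported_in (preds S) D I"
    "C ` consts_fm S \<subseteq> D" "e' x \<notin> D" "\<forall>y. y \<noteq> x \<longrightarrow> e' y = e y"
  shows "dir_imp ((q = QAll) = pol) (eval C I e S) (eval C I e' S)"
  using assms
proof (induction S arbitrary: pol)
  case (Atom p ts)
  then show ?case
    using good_sub_dir_imp[of q x pol "Atom p ts" D I C e' e]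
      eval_cong_notin_fv[of x "Atom p ts" e' e C I]
    by auto
next
  case (Eq t1 t2)
  then show ?case
    using good_sub_dir_imp[of q x pol "Eq t1 t2" D I C e' e]
      eval_cong_notin_fv[of x "Eq t1 t2" e' e C I]
    by auto
next
  case (And G H)
  then show ?case
    using good_sub_dir_imp[of q x pol "And G H" D I C e' e]
    by (auto simp: image_Un intro: dir_imp_conj)
next
  case (Or G H)
  then show ?case
    using good_sub_dir_imp[of q x pol "Or G H" D I C e' e]
    by (auto simp: image_Un intro: dir_imp_disj)
next
  case (Imp G H)
  show ?case
  proof (cases "good_sub q x pol (Imp G H)")
    case False
    with Imp.prems(2) have "all_occ_covered q x (\<not> pol) G" and "all_occ_covered q x pol H"
      by simp_all
    with Imp.prems have "dir_imp ((q = QAll) = (\<not> pol)) (eval C I e G) (eval C I e' G)"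
      and "dir_imp ((q = QAll) = pol) (eval C I e H) (eval C I e' H)"
      by (intro Imp.IH; auto)+
    then show ?thesis
      unfolding eval.simps using dir_imp_imp[of "(q = QAll) = pol"] by simp
  qed (rule good_sub_dir_imp[of q x pol "Imp G H" D I C e' e, OF _ Imp.prems(3-5)])
qed simp_all

lemma eval_ground_iff:
  assumes "distinct (map snd (prefix H))" and "qfree (matrix H)"
    and "\<forall>(q, x)\<in>set (prefix H). all_occ_covered q x True (matrix H)"
    and "cs \<noteq> []" and "consts_fm H \<subseteq> set cs" and "supported_in (preds H) (C ` set cs) I"
  shows "eval C I e (ground cs H) \<longleftrightarrow> eval C I e H"
proof -
  let ?\<Phi> = "\<lambda>e. eval C I e (matrix H)"
  have matrix_consts: "C ` consts_fm (matrix H) \<subseteq> C ` set cs"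
    using assms(5) by auto
  have "relativizable (C ` set cs) q x ?\<Phi>" if "(q, x) \<in> set (prefix H)" for q x
    unfolding relativizable_def
  proof (intro allI impI)
    fix e d
    assume "d \<notin> C ` set cs"
    moreover have "all_occ_covered q x True (matrix H)"
      using assms(3) that by auto
    ultimately show "dir_imp (q = QAll) (?\<Phi> e) (?\<Phi> (e(x := d)))"
      using all_occ_covered_dir_imp[where pol = True and e' = "e(x := d)",
          OF assms(2) _ _ matrix_consts] assms(6)
      by simp
  qed
  then have "eval_prefix UNIV (prefix H) ?\<Phi> e = eval_prefix (C ` set cs) (prefix H) ?\<Phi> e"
    using assms(1,4) by (intro eval_prefix_relativize) auto
  then show ?thesis
    unfolding eval_ground[OF assms(4)] eval_prenex[of C I e H] by simp
qed

lemma sat_ground_iff: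
  assumes "safe F" and "cs \<noteq> []" and "consts_fm F \<subseteq> set cs"
    and "supported_in (preds F) (C ` set cs) P"
  shows "sat C P (ground cs F) \<longleftrightarrow> sat C P F"
  using assms eval_ground_iff[of F cs C P]
  by (simp add: sat_def safe_def semi_safe_def prenex_sentence_def)

lemma sat_star_ground_iff:
  assumes "safe F" and "cs \<noteq> []" and "consts_fm F \<subseteq> set cs"
    and "supported_in (preds F) (C ` set cs) P" and "supported_in (preds F) (C ` set cs) U"
  shows "sat C (case_sum P U) (star (ground cs F)) \<longleftrightarrow> sat C (case_sum P U) (star F)"
proof -
  have "supported_in (preds (star F)) (C ` set cs) (case_sum P U)"
    using assms(4,5) by (rule supported_in_star)
  moreover have "\<forall>(q, x)\<in>set (prefix F). all_occ_covered q x True (star (matrix F))"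
    using assms(1) by (auto simp: safe_def intro: all_occ_covered_star)
  ultimately show ?thesis
    using assms(1-3) eval_ground_iff[of "star F" cs C "case_sum P U"]
    by (simp add: sat_def star_ground safe_def semi_safe_def prenex_sentence_def)
qed

section \<open>Semi-safety\<close>

definition restrict_preds :: "'d set \<Rightarrow> ('p \<Rightarrow> 'd list \<Rightarrow> bool) \<Rightarrow> 'p \<Rightarrow> 'd list \<Rightarrow> bool" where
  "restrict_preds D P p ds \<longleftrightarrow> P p ds \<and> set ds \<subseteq> D"

lemma rv_in_if_eval_star:
  assumes "\<And>p ds. U p ds \<Longrightarrow> set ds \<subseteq> D" and "C ` consts_fm G \<subseteq> D"
    and "eval C (case_sum P U) e (star G)" and "x \<in> rv G"
  shows "e x \<in> D"
  using assms(2-4)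
proof (induction G)
  case (Atom p ts)
  have "set (map (tval C e) ts) \<subseteq> D"
    using assms(1)[of p "map (tval C e) ts"] Atom.prems(2) by simp
  moreover have "Var x \<in> set ts"
    using Atom.prems(3) by (auto simp: mem_tvars_iff)
  ultimately show ?case by force
next
  case (Eq t1 t2)
  then show ?case by (cases t1; cases t2) auto
qed auto

lemma eval_star_restrict_preds:
  assumes "qfree G" and "C ` consts_fm G \<subseteq> D" and "\<forall>x\<in>sp_unrestricted G. e x \<in> D"
    and "eval C P e G"
  shows "eval C (case_sum P (restrict_preds D P)) e (star G)"
  using assms
proof (induction G)
  case (Atom p ts)
  have "tval C e t \<in> D" if "t \<in> set ts" for t
    using Atom.prems(2,3) that by (cases t) force+
  with Atom.prems(4) show ?case
    by (auto simp: restrict_preds_def)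
next
  case (Imp G H)
  have "eval C (case_sum P (restrict_preds D P)) e (star H)"
    if star_G: "eval C (case_sum P (restrict_preds D P)) e (star G)"
  proof (rule Imp.IH(2))
    have "eval C P e G"
      using star_G by (rule eval_of_eval_star[rotated]) (simp add: restrict_preds_def)
    then show "eval C P e H"
      using Imp.prems(4) by simp
    have "e x \<in> D" if "x \<in> rv G" for x
      using rv_in_if_eval_star[of "restrict_preds D P" D C G P e x] star_G that Imp.prems(2)
      by (auto simp: restrict_preds_def)
    then show "\<forall>x\<in>sp_unrestricted H. e x \<in> D"
      using Imp.prems(3) by auto
  qed (use Imp.prems in auto)
  with Imp.prems(4) show ?case
    by simp
qed auto

lemma eval_prefix_star_restrict_preds:
  assumes "semi_safe F" and "C ` consts_fm F \<subseteq> D"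
    and "eval_prefix D' (prefix F) (\<lambda>e. eval C P e (matrix F)) e"
  shows "eval_prefix D' (prefix F)
    (\<lambda>e. eval C (case_sum P (restrict_preds D P)) e (star (matrix F))) e"
proof (rule eval_prefix_mono[OF _ assms(3)])
  fix e
  show "eval C P e (matrix F) \<Longrightarrow> eval C (case_sum P (restrict_preds D P)) e (star (matrix F))"
    using assms(1,2) sp_unrestricted_matrix_empty[OF assms(1)]
    by (intro eval_star_restrict_preds) (auto simp: semi_safe_def prenex_sentence_def)
qed

lemma sat_star_restrict_preds:
  assumes "semi_safe F" and "C ` consts_fm F \<subseteq> D" and "sat C P F"
  shows "sat C (case_sum P (restrict_preds D P)) (star F)"
  using assms eval_prefix_star_restrict_preds[OF assms(1,2), of UNIV]
  by (simp add: sat_def eval_prenex[of C _ _ F] eval_prenex[of C _ _ "star F"])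

lemma sat_star_ground_restrict_preds:
  assumes "semi_safe F" and "cs \<noteq> []" and "consts_fm F \<subseteq> set cs" and "sat C P (ground cs F)"
  shows "sat C (case_sum P (restrict_preds (C ` set cs) P)) (star (ground cs F))"
  using assms eval_prefix_star_restrict_preds[OF assms(1), of C "C ` set cs"]
  by (simp add: sat_def star_ground eval_ground image_mono)

lemma supported_in_if_le_on: "le_on Ps U P \<Longrightarrow> supported_in Ps D P \<Longrightarrow> supported_in Ps D U"
  unfolding le_on_def supported_in_def by fastforce

lemma supported_in_if_SM:
  assumes "SM C P G" and "sat C (case_sum P (restrict_preds D P)) (star G)"
  shows "supported_in (preds G) D P"
proof -
  have "le_on (preds G) (restrict_preds D P) P"
    by (simp add: le_on_def restrict_preds_def)
  with assms have "eq_on (preds G) (restrict_preds D P) P"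
    unfolding SM_def lt_on_def by blast
  then show ?thesis
    unfolding eq_on_def supported_in_def restrict_preds_def by fastforce
qed

lemma SM_supported_in:
  assumes "semi_safe F" and "C ` consts_fm F \<subseteq> D" and "SM C P F"
  shows "supported_in (preds F) D P"
proof -
  have "sat C P F"
    using assms(3) by (simp add: SM_def)
  with assms(1,2) have "sat C (case_sum P (restrict_preds D P)) (star F)"
    by (rule sat_star_restrict_preds)
  with assms(3) show ?thesis
    by (rule supported_in_if_SM)
qed

lemma SM_ground_supported_in:
  assumes "semi_safe F" and "cs \<noteq> []" and "consts_fm F \<subseteq> set cs" and "SM C P (ground cs F)"
  shows "supported_in (preds F) (C ` set cs) P"
proof -
  have "sat C P (ground cs F)"
    using assms(4) by (simp add: SM_def)
  with assms(1-3) have "sat C (case_sum P (restrict_preds (C ` set cs) P)) (star (ground cs F))"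
    by (rule sat_star_ground_restrict_preds)
  with assms(4) have "supported_in (preds (ground cs F)) (C ` set cs) P"
    by (rule supported_in_if_SM)
  with assms(2) show ?thesis
    by (simp add: preds_ground)
qed

lemma SM_cong_supported:
  assumes "preds G = preds H" and "supported_in (preds H) D P"
    and "sat C P G \<longleftrightarrow> sat C P H"
    and "\<And>U. supported_in (preds H) D U \<Longrightarrow>
      sat C (case_sum P U) (star G) \<longleftrightarrow> sat C (case_sum P U) (star H)"
  shows "SM C P G \<longleftrightarrow> SM C P H"
proof -
  have "lt_on (preds H) U P \<Longrightarrow> supported_in (preds H) D U" for U
    using assms(2) supported_in_if_le_on unfolding lt_on_def by blast
  with assms show ?thesis
    unfolding SM_def by metis
qed

theorem proposition3:
  fixes F :: "('p, 'v, 'c) fm" and cs :: "'c list"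
    and C :: "'c \<Rightarrow> 'd" and P :: "'p \<Rightarrow> 'd list \<Rightarrow> bool"
  assumes "safe F"
    and "cs \<noteq> []" and "distinct cs"
    and "consts_fm F \<subseteq> set cs"
  shows "SM C P (ground cs F) \<longleftrightarrow> SM C P F"
proof (cases "supported_in (preds F) (C ` set cs) P")
  case True
  with assms(1,2,4) show ?thesis
    by (intro SM_cong_supported[OF preds_ground[OF assms(2)] True]
        sat_ground_iff sat_star_ground_iff)
next
  case False
  from assms(1) have "semi_safe F"
    by (simp add: safe_def)
  have "\<not> SM C P (ground cs F)"
    using SM_ground_supported_in[OF \<open>semi_safe F\<close> assms(2,4)] False by blast
  moreover have "\<not> SM C P F"
    using SM_supported_in[OF \<open>semi_safe F\<close> image_mono[OF assms(4)]] False by blast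
  ultimately show ?thesis
    by blast
qed

end
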